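(* Let $k$ be a field of characteristic $p\ge 0$ with algebraic closure $\overline k$. Let $$\sigma(x)=\sum_{i=d}^{\infty}\alpha_i x^i\in\overline k((x)),$$ with $d\in\mathbb Z$ and $\alpha_i\in\overline k$ for all $i$, and let $L=k(\{\alpha_i\})\subset\overline k$ be the field generated over $k$ by the coefficients of $\sigma$. Then $\sigma(x)$ is algebraic over $k((x))$ if and only if there exists $n\in\mathbb N$ such that $[kL^{p^n}:k]<\infty$, where $kL^{p^n}$ denotes the compositum of $k$ and $L^{p^n}$ in $\overline k$.
   Context: For a field $L$ of characteristic $p>0$ and $n\in\mathbb N$, $L^{p^n}=\{f^{p^n}\mid f\in L\}$; if the characteristic is $0$, set $L^{p^n}=L$ for all $n$. $\overline k((x))$ denotes the field of formal Laurent series in $x$ with coefficients in $\overline k$. *)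

theory Defs
  imports "HOL-Computational_Algebra.Computational_Algebra"
begin

definition is_subfield :: "'a::field set \<Rightarrow> bool" where
  "is_subfield S \<longleftrightarrow> 0 \<in> S \<and> 1 \<in> S \<and>
     (\<forall>x\<in>S. \<forall>y\<in>S. x + y \<in> S \<and> x - y \<in> S \<and> x * y \<in> S) \<and>
     (\<forall>x\<in>S. inverse x \<in> S)"

definition gen_field :: "'a::field set \<Rightarrow> 'a set" where
  "gen_field A = \<Inter>{S. is_subfield S \<and> A \<subseteq> S}"

definition algebraic_over :: "'a::field set \<Rightarrow> 'a \<Rightarrow> bool" where
  "algebraic_over K x \<longleftrightarrow>
     (\<exists>q :: 'a poly. q \<noteq> 0 \<and> (\<forall>i. coeff q i \<in> K) \<and> poly q x = 0)"

(* [M : K] < infinity : M is a finite-dimensional K-vector space *)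
definition finite_degree :: "'a::field set \<Rightarrow> 'a set \<Rightarrow> bool" where
  "finite_degree K M \<longleftrightarrow>
     (\<exists>B. finite B \<and> B \<subseteq> M \<and>
        M \<subseteq> {\<Sum>b\<in>B. c b * b | c. \<forall>b\<in>B. c b \<in> K})"

(* L^{p^n}, with p the characteristic; L^{p^n} = L in characteristic 0 *)
definition frob_pow_set :: "nat \<Rightarrow> 'a::field set \<Rightarrow> 'a set" where
  "frob_pow_set n L =
     (if CHAR('a) = 0 then L else (\<lambda>f. f ^ (CHAR('a) ^ n)) ` L)"

(* k((x)) inside kbar((x)): Laurent series with all coefficients in K *)
definition laurent_over :: "'a::field set \<Rightarrow> 'a fls set" where
  "laurent_over K = {f. \<forall>i. fls_nth f i \<in> K}"

end

theory Submission
  imports Defs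
begin

(* The field k is a subset K of an algebraically closed type; q = p^n is a power of
   the characteristic (q = 1 in characteristic 0), E = k((x)) = laurent_over K, and
   L = K(coefficients of sigma).

   Sufficiency.  If [K L^q : K] is finite with K-basis B, every coefficient of
   sigma^q lies in K L^q, so sigma^q is an E-linear combination of the constant
   series of B.  These span a finite-dimensional E-algebra, hence the powers of
   sigma^q are E-linearly dependent: sigma^q, and therefore sigma, is algebraic.

   Necessity.  If sigma is algebraic over E, some tau = sigma^q is a simple root of a
   polynomial P over E (separable reduction).  A Hensel-type recursion, based on the
   divided difference quotient of P, shows that every coefficient of tau lies in the
   field generated by K and finitely many coefficients of tau; as everything is
   algebraic over K this field is finite over K.  The coefficients of tau are the q-th
   powers of those of sigma, so this finite extension contains K L^q. *)

unbundle fps_syntax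

section \<open>Subfields\<close>

lemma subfieldD:
  assumes "is_subfield S"
  shows "0 \<in> S" "1 \<in> S" "x \<in> S \<Longrightarrow> y \<in> S \<Longrightarrow> x + y \<in> S"
    "x \<in> S \<Longrightarrow> y \<in> S \<Longrightarrow> x - y \<in> S" "x \<in> S \<Longrightarrow> y \<in> S \<Longrightarrow> x * y \<in> S"
    "x \<in> S \<Longrightarrow> inverse x \<in> S"
  using assms unfolding is_subfield_def by auto

lemma subfield_uminus: "is_subfield S \<Longrightarrow> x \<in> S \<Longrightarrow> - x \<in> S"
  by (metis diff_0 subfieldD(1,4))

lemma subfield_divide: "is_subfield S \<Longrightarrow> x \<in> S \<Longrightarrow> y \<in> S \<Longrightarrow> x / y \<in> S"
  by (simp add: divide_inverse subfieldD(5,6))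

lemma subfield_power: "is_subfield S \<Longrightarrow> x \<in> S \<Longrightarrow> x ^ n \<in> S"
  by (induction n) (auto intro: subfieldD)

lemma subfield_sum: "is_subfield S \<Longrightarrow> (\<And>i. i \<in> A \<Longrightarrow> f i \<in> S) \<Longrightarrow> sum f A \<in> S"
  by (induction A rule: infinite_finite_induct) (auto intro: subfieldD)

lemma subfield_of_nat: "is_subfield S \<Longrightarrow> of_nat n \<in> S"
  by (induction n) (auto intro: subfieldD)

lemma gen_field_subfield: "is_subfield (gen_field A)"
  unfolding gen_field_def is_subfield_def by auto

lemma gen_field_superset: "A \<subseteq> gen_field A"
  unfolding gen_field_def by auto

lemma gen_field_least: "is_subfield S \<Longrightarrow> A \<subseteq> S \<Longrightarrow> gen_field A \<subseteq> S"
  unfolding gen_field_def by auto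

lemma poly_in_closed_set:
  assumes "0 \<in> S" "1 \<in> S" "\<And>u v. u \<in> S \<Longrightarrow> v \<in> S \<Longrightarrow> u + v \<in> S"
    "\<And>u v. u \<in> S \<Longrightarrow> v \<in> S \<Longrightarrow> u * v \<in> S" "\<forall>i. coeff q i \<in> S" "(y::'a::comm_ring_1) \<in> S"
  shows "poly q y \<in> S"
proof -
  have powers: "y ^ n \<in> S" for n by (induction n) (use assms in auto)
  have "(\<Sum>i\<in>I. coeff q i * y ^ i) \<in> S" for I
    by (induction I rule: infinite_finite_induct) (use assms powers in auto)
  then show ?thesis by (simp add: poly_altdef)
qed

section \<open>Linear spans over a subfield\<close>

definition lspan :: "'a::field set \<Rightarrow> 'a set \<Rightarrow> 'a set" where
  "lspan K B = {\<Sum>b\<in>B. c b * b | c. \<forall>b\<in>B. c b \<in> K}"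

lemma finite_degree_lspan: "finite_degree K M \<longleftrightarrow> (\<exists>B. finite B \<and> B \<subseteq> M \<and> M \<subseteq> lspan K B)"
  unfolding finite_degree_def lspan_def by auto

lemma lspanI: "(\<And>b. b \<in> B \<Longrightarrow> c b \<in> K) \<Longrightarrow> (\<Sum>b\<in>B. c b * b) \<in> lspan K B"
  unfolding lspan_def by blast

lemma lspanE:
  assumes "x \<in> lspan K B"
  obtains c where "x = (\<Sum>b\<in>B. c b * b)" "\<forall>b\<in>B. c b \<in> K"
  using assms unfolding lspan_def by auto

lemma lspan_zero: "is_subfield K \<Longrightarrow> 0 \<in> lspan K B"
  using lspanI[of B "\<lambda>_. 0" K] by (simp add: subfieldD)

lemma lspan_add:
  assumes K: "is_subfield K" and x: "x \<in> lspan K B" and y: "y \<in> lspan K B"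
  shows "x + y \<in> lspan K B"
proof -
  obtain c where c: "x = (\<Sum>b\<in>B. c b * b)" "\<forall>b\<in>B. c b \<in> K" using x by (rule lspanE)
  obtain d where d: "y = (\<Sum>b\<in>B. d b * b)" "\<forall>b\<in>B. d b \<in> K" using y by (rule lspanE)
  have "x + y = (\<Sum>b\<in>B. (c b + d b) * b)" by (simp add: c d sum.distrib distrib_right)
  also have "\<dots> \<in> lspan K B" by (rule lspanI) (use c d K in \<open>auto intro: subfieldD\<close>)
  finally show ?thesis .
qed

lemma lspan_smult:
  assumes K: "is_subfield K" and x: "x \<in> lspan K B" and a: "a \<in> K"
  shows "a * x \<in> lspan K B"
proof -
  obtain c where c: "x = (\<Sum>b\<in>B. c b * b)" "\<forall>b\<in>B. c b \<in> K" using x by (rule lspanE)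
  have "a * x = (\<Sum>b\<in>B. (a * c b) * b)" by (simp add: c sum_distrib_left mult.assoc)
  also have "\<dots> \<in> lspan K B" by (rule lspanI) (use c a K in \<open>auto intro: subfieldD\<close>)
  finally show ?thesis .
qed

lemma lspan_diff:
  assumes K: "is_subfield K" and x: "x \<in> lspan K B" and y: "y \<in> lspan K B"
  shows "x - y \<in> lspan K B"
proof -
  have "(-1) * y \<in> lspan K B" by (rule lspan_smult[OF K y]) (meson K subfieldD(2) subfield_uminus)
  then show ?thesis using lspan_add[OF K x, of "-y"] by simp
qed

lemma lspan_sum:
  assumes K: "is_subfield K" and "\<And>i. i \<in> I \<Longrightarrow> f i \<in> lspan K B"
  shows "sum f I \<in> lspan K B"
  using assms(2) by (induction I rule: infinite_finite_induct) (auto intro: lspan_add lspan_zero K)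

lemma lspan_gen:
  assumes K: "is_subfield K" and "finite B" "b \<in> B"
  shows "b \<in> lspan K B"
proof -
  have "(\<Sum>b'\<in>B. (if b' = b then 1 else 0) * b') = (\<Sum>b'\<in>B. if b' = b then b' else 0)"
    by (rule sum.cong) auto
  also have "\<dots> = b" using assms(2,3) by (simp add: sum.delta')
  finally show ?thesis using lspanI[of B "\<lambda>b'. if b' = b then 1 else 0" K] K by (simp add: subfieldD)
qed

lemma lspan_empty: "is_subfield K \<Longrightarrow> lspan K {} = {0}"
  unfolding lspan_def by (auto intro: subfieldD)

lemma lspan_mult_right:
  assumes K: "is_subfield K" and x: "x \<in> lspan K B" and "\<And>b. b \<in> B \<Longrightarrow> b * p \<in> lspan K C"
  shows "x * p \<in> lspan K C"
proof -
  obtain c where c: "x = (\<Sum>b\<in>B. c b * b)" "\<forall>b\<in>B. c b \<in> K" using x by (rule lspanE)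
  have "x * p = (\<Sum>b\<in>B. c b * (b * p))" by (simp add: c sum_distrib_right mult.assoc)
  also have "\<dots> \<in> lspan K C" by (rule lspan_sum[OF K]) (use c assms in \<open>auto intro: lspan_smult\<close>)
  finally show ?thesis .
qed

lemma lspan_mult:
  assumes K: "is_subfield K" and BB: "\<And>b b'. b \<in> B \<Longrightarrow> b' \<in> B \<Longrightarrow> b * b' \<in> lspan K B"
    and x: "x \<in> lspan K B" and y: "y \<in> lspan K B"
  shows "x * y \<in> lspan K B"
proof -
  have "b * y \<in> lspan K B" if b: "b \<in> B" for b
    using lspan_mult_right[OF K y, of b B] BB b by (simp add: mult.commute)
  then show ?thesis by (rule lspan_mult_right[OF K x])
qed

lemma lspan_tower:
  assumes K: "is_subfield K" and F: "F \<subseteq> lspan K B" and "finite B" "finite C"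
  shows "lspan F C \<subseteq> lspan K ((\<lambda>(b, c). b * c) ` (B \<times> C))"
proof
  fix x assume "x \<in> lspan F C"
  then obtain c where c: "x = (\<Sum>p\<in>C. c p * p)" "\<forall>p\<in>C. c p \<in> F" by (rule lspanE)
  show "x \<in> lspan K ((\<lambda>(b, c). b * c) ` (B \<times> C))"
    unfolding c(1)
  proof (rule lspan_sum[OF K], rule lspan_mult_right[OF K])
    fix p b assume "p \<in> C" "b \<in> B"
    then show "b * p \<in> lspan K ((\<lambda>(b, c). b * c) ` (B \<times> C))"
      using assms(3,4) by (intro lspan_gen[OF K]) auto
  qed (use c F in auto)
qed

section \<open>The exchange lemma and finite degree\<close>

lemma lspan_eliminate:
  assumes E: "is_subfield E"
    and ew: "\<And>j. j \<in> J \<Longrightarrow> e j \<in> E \<and> w j \<in> lspan E B \<and> v j = e j * b + w j"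
    and k: "k \<in> J" "e k \<noteq> 0" and j: "j \<in> J"
  shows "v j - (e j / e k) * v k \<in> lspan E B"
proof -
  have "v j - (e j / e k) * v k = w j - (e j / e k) * w k"
    using ew[OF j] ew[OF k(1)] k(2) by (simp add: field_simps)
  also have "\<dots> \<in> lspan E B"
    using ew[OF j] ew[OF k(1)] by (intro lspan_diff[OF E] lspan_smult[OF E] subfield_divide[OF E]) auto
  finally show ?thesis .
qed

lemma dependence_lift:
  assumes E: "is_subfield E" and J: "finite J" and k: "k \<in> J" "e k \<noteq> 0"
    and e: "\<And>j. j \<in> J \<Longrightarrow> e j \<in> E"
    and c': "\<forall>j\<in>J - {k}. c' j \<in> E" "\<exists>j\<in>J - {k}. c' j \<noteq> 0"
      "(\<Sum>j\<in>J - {k}. c' j * (v j - (e j / e k) * v k)) = 0"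
  shows "\<exists>c. (\<forall>j\<in>J. c j \<in> E) \<and> (\<exists>j\<in>J. c j \<noteq> 0) \<and> (\<Sum>j\<in>J. c j * v j) = 0"
proof -
  define s where "s = (\<Sum>j\<in>J - {k}. c' j * (e j / e k))"
  define c where "c j = (if j = k then - s else c' j)" for j
  have sE: "s \<in> E" unfolding s_def using c' e k
    by (intro subfield_sum[OF E] subfieldD(5)[OF E] subfield_divide[OF E]) auto
  have "(\<Sum>j\<in>J. c j * v j) = c k * v k + (\<Sum>j\<in>J - {k}. c j * v j)"
    using J k by (simp add: sum.remove)
  also have "(\<Sum>j\<in>J - {k}. c j * v j) = (\<Sum>j\<in>J - {k}. c' j * v j)"
    by (rule sum.cong) (auto simp: c_def)
  also have "\<dots> = (\<Sum>j\<in>J - {k}. c' j * (v j - (e j / e k) * v k)) + s * v k"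
    unfolding s_def
    by (simp add: algebra_simps sum.distrib sum_distrib_right sum_distrib_left sum_subtractf times_divide_eq_right)
  finally have "(\<Sum>j\<in>J. c j * v j) = 0" using c'(3) by (simp add: c_def)
  moreover have "\<forall>j\<in>J. c j \<in> E" using c' sE E by (auto simp: c_def intro: subfield_uminus)
  moreover have "\<exists>j\<in>J. c j \<noteq> 0" using c'(2) by (auto simp: c_def)
  ultimately show ?thesis by blast
qed

lemma lin_dep:
  fixes E :: "'a::field set"
  assumes E: "is_subfield E" and B: "finite B"
  shows "finite J \<Longrightarrow> card J > card B \<Longrightarrow> (\<forall>j\<in>J. v j \<in> lspan E B) \<Longrightarrow>
    \<exists>c. (\<forall>j\<in>J. c j \<in> E) \<and> (\<exists>j\<in>J. c j \<noteq> 0) \<and> (\<Sum>j\<in>J. c j * v j) = 0"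
  using B
proof (induction B arbitrary: J v rule: finite_induct)
  case empty
  then obtain j0 where j0: "j0 \<in> J" by fastforce
  have "v j = 0" if "j \<in> J" for j using empty.prems(3) that lspan_empty[OF E] by auto
  then show ?case
    by (intro exI[of _ "\<lambda>j. if j = j0 then 1 else 0"]) (use j0 E in \<open>auto intro: subfieldD\<close>)
next
  case (insert b B)
  have "\<forall>j\<in>J. \<exists>e w. e \<in> E \<and> w \<in> lspan E B \<and> v j = e * b + w"
  proof
    fix j assume "j \<in> J"
    then obtain c where c: "v j = (\<Sum>y\<in>insert b B. c y * y)" "\<forall>y\<in>insert b B. c y \<in> E"
      using insert.prems(3) lspanE by metis
    have "v j = c b * b + (\<Sum>y\<in>B. c y * y)" using c(1) insert.hyps by simp
    moreover have "(\<Sum>y\<in>B. c y * y) \<in> lspan E B" by (rule lspanI) (use c(2) in auto)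
    ultimately show "\<exists>e w. e \<in> E \<and> w \<in> lspan E B \<and> v j = e * b + w"
      using c(2) by blast
  qed
  then obtain e w where ew: "\<And>j. j \<in> J \<Longrightarrow> e j \<in> E \<and> w j \<in> lspan E B \<and> v j = e j * b + w j"
    by metis
  show ?case
  proof (cases "\<forall>j\<in>J. e j = 0")
    case True
    then have "\<forall>j\<in>J. v j \<in> lspan E B" using ew by auto
    then show ?thesis using insert.IH[OF insert.prems(1)] insert.prems(2) insert.hyps by simp
  next
    case False
    then obtain k where k: "k \<in> J" "e k \<noteq> 0" by blast
    have "card (J - {k}) > card B" using insert.prems(2) insert.hyps k(1) by simp
    then obtain c' where "\<forall>j\<in>J - {k}. c' j \<in> E" "\<exists>j\<in>J - {k}. c' j \<noteq> 0"
        "(\<Sum>j\<in>J - {k}. c' j * (v j - (e j / e k) * v k)) = 0"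
      using insert.IH[of "J - {k}" "\<lambda>j. v j - (e j / e k) * v k"] insert.prems(1)
        lspan_eliminate[where e=e and w=w and v=v, OF E ew k] by auto
    then show ?thesis using dependence_lift[where e=e, OF E insert.prems(1) k] ew by blast
  qed
qed

definition indep :: "'a::field set \<Rightarrow> 'a set \<Rightarrow> bool" where
  "indep K S \<longleftrightarrow> (\<forall>c. (\<forall>s\<in>S. c s \<in> K) \<and> (\<Sum>s\<in>S. c s * s) = 0 \<longrightarrow> (\<forall>s\<in>S. c s = 0))"

lemma indep_card:
  assumes K: "is_subfield K" and B: "finite B" and S: "finite S" "indep K S" "S \<subseteq> lspan K B"
  shows "card S \<le> card B"
proof (rule ccontr)
  assume "\<not> card S \<le> card B"
  then obtain c where "\<forall>j\<in>S. c j \<in> K" "\<exists>j\<in>S. c j \<noteq> 0" "(\<Sum>j\<in>S. c j * j) = 0"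
    using lin_dep[OF K B S(1), of "\<lambda>s. s"] S(3) by auto
  with S(2) show False unfolding indep_def by blast
qed

lemma indep_insert:
  assumes K: "is_subfield K" and S: "finite S" "indep K S" and y: "y \<notin> lspan K S"
  shows "indep K (insert y S)"
  unfolding indep_def
proof (intro allI impI)
  fix c assume c: "(\<forall>s\<in>insert y S. c s \<in> K) \<and> (\<Sum>s\<in>insert y S. c s * s) = 0"
  have yS: "y \<notin> S" using lspan_gen[OF K S(1)] y by blast
  then have eq: "c y * y + (\<Sum>s\<in>S. c s * s) = 0" using c S(1) by simp
  have cy: "c y = 0"
  proof (rule ccontr)
    assume cy: "c y \<noteq> 0"
    have "y = (\<Sum>s\<in>S. (- c s / c y) * s)"
      using eq cy by (simp add: sum_distrib_left[symmetric] field_simps sum_negf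
           flip: sum_divide_distrib) (metis add.commute add_eq_0_iff2 mult.commute)
    moreover have "(\<Sum>s\<in>S. (- c s / c y) * s) \<in> lspan K S"
      by (rule lspanI) (use c K in \<open>auto intro: subfield_divide subfield_uminus\<close>)
    ultimately show False using y by simp
  qed
  then have "\<forall>s\<in>S. c s = 0" using eq S(2) c unfolding indep_def by auto
  then show "\<forall>s\<in>insert y S. c s = 0" using cy by simp
qed

(* Any subset of a finite-dimensional span has finite degree: a maximal independent
   subset of M spans M. *)
lemma finite_degree_of_subset:
  assumes K: "is_subfield K" and B: "finite B" and M: "M \<subseteq> lspan K B"
  shows "finite_degree K M"
proof -
  define P where "P n \<longleftrightarrow> (\<exists>S. finite S \<and> S \<subseteq> M \<and> indep K S \<and> card S = n)" for n
  have "P 0" unfolding P_def indep_def by (intro exI[of _ "{}"]) auto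
  moreover have "\<forall>n. P n \<longrightarrow> n \<le> card B" unfolding P_def using indep_card[OF K B] M by blast
  ultimately obtain n where n: "P n" "\<forall>m. P m \<longrightarrow> m \<le> n"
    using Nat.ex_has_greatest_nat[of P 0 "card B"] by blast
  then obtain S where S: "finite S" "S \<subseteq> M" "indep K S" "card S = n" unfolding P_def by blast
  have "M \<subseteq> lspan K S"
  proof
    fix y assume y: "y \<in> M"
    show "y \<in> lspan K S"
    proof (rule ccontr)
      assume ny: "y \<notin> lspan K S"
      then have "y \<notin> S" using lspan_gen[OF K S(1)] by blast
      then have "P (Suc n)" unfolding P_def using S y indep_insert[OF K S(1,3) ny]
        by (intro exI[of _ "insert y S"]) auto
      then show False using n(2) by fastforce
    qed
  qed
  then show ?thesis unfolding finite_degree_lspan using S by blast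
qed

section \<open>Finite algebraic extensions\<close>

lemma root_degree_pos:
  assumes "P \<noteq> 0" "poly P x = 0" shows "degree P > 0"
proof (rule ccontr)
  assume "\<not> degree P > 0"
  then obtain c where "P = [:c:]" by (metis degree_eq_zeroE neq0_conv)
  then show False using assms by simp
qed

(* A ring S containing K is closed under inverses of elements algebraic over K:
   from y * Q(y) = -c with c \<noteq> 0 the constant term of a minimal-degree relation. *)
lemma inverse_in_algebraic_ring:
  assumes K: "is_subfield K" and KS: "K \<subseteq> S"
    and add: "\<And>u v. u \<in> S \<Longrightarrow> v \<in> S \<Longrightarrow> u + v \<in> S"
    and mul: "\<And>u v. u \<in> S \<Longrightarrow> v \<in> S \<Longrightarrow> u * v \<in> S"
    and neg: "\<And>u. u \<in> S \<Longrightarrow> - u \<in> S"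
    and y: "y \<in> S" and alg: "algebraic_over K y"
  shows "inverse y \<in> S"
proof (cases "y = 0")
  case True then show ?thesis using K KS subfieldD(1) by fastforce
next
  case ynz: False
  have S01: "0 \<in> S" "1 \<in> S" using K KS subfieldD(1,2) by auto
  have main: "degree q = n \<Longrightarrow> q \<noteq> 0 \<Longrightarrow> (\<forall>i. coeff q i \<in> K) \<Longrightarrow> poly q y = 0 \<Longrightarrow> inverse y \<in> S"
    for n q
  proof (induction n arbitrary: q rule: less_induct)
    case (less n q)
    obtain c q' where q: "q = pCons c q'" by (cases q) auto
    have cq': "\<forall>i. coeff q' i \<in> K" using less.prems(3) unfolding q by (metis coeff_pCons_Suc)
    have cK: "c \<in> K" using less.prems(3)[rule_format, of 0] unfolding q by simp
    show ?case
    proof (cases "c = 0")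
      case True
      have q'nz: "q' \<noteq> 0" using less.prems(2) q True by auto
      have "y * poly q' y = 0" using less.prems(4) q True by simp
      then have "poly q' y = 0" using ynz by simp
      moreover have "degree q' < n" using less.prems(1) q q'nz True by simp
      ultimately show ?thesis using less.IH q'nz cq' by blast
    next
      case False
      have "c + y * poly q' y = 0" using less.prems(4) q by simp
      then have "inverse y = (- poly q' y) * inverse c" using False ynz
        by (simp add: field_simps) (metis add.commute add_eq_0_iff2 mult.commute)
      moreover have "poly q' y \<in> S"
        by (rule poly_in_closed_set) (use S01 add mul cq' KS y in auto)
      moreover have "inverse c \<in> S" using cK K KS subfieldD(6) by blast
      ultimately show ?thesis using mul neg by simp
    qed
  qed
  from alg obtain q where "q \<noteq> 0" "\<forall>i. coeff q i \<in> K" "poly q y = 0"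
    unfolding algebraic_over_def by blast
  then show ?thesis using main by blast
qed

lemma algebraic_ring_is_subfield:
  assumes K: "is_subfield K" and KS: "K \<subseteq> S"
    and add: "\<And>u v. u \<in> S \<Longrightarrow> v \<in> S \<Longrightarrow> u + v \<in> S"
    and mul: "\<And>u v. u \<in> S \<Longrightarrow> v \<in> S \<Longrightarrow> u * v \<in> S"
    and neg: "\<And>u. u \<in> S \<Longrightarrow> - u \<in> S"
    and alg: "\<And>y. y \<in> S \<Longrightarrow> algebraic_over K y"
  shows "is_subfield S"
  unfolding is_subfield_def
proof (intro conjI ballI)
  show "0 \<in> S" "1 \<in> S" using K KS subfieldD(1,2) by auto
  fix x y assume "x \<in> S" "y \<in> S"
  then show "x + y \<in> S" "x - y \<in> S" "x * y \<in> S"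
    using add[of x "- y"] add mul neg by auto
next
  fix x assume "x \<in> S"
  then show "inverse x \<in> S" using inverse_in_algebraic_ring[OF K KS add mul neg] alg by blast
qed

lemma powers_in_span:
  assumes F: "is_subfield F" and q: "q \<noteq> 0" "\<forall>i. coeff q i \<in> F" "poly q a = 0"
  shows "a ^ m \<in> lspan F ((\<lambda>j. a ^ j) ` {..<degree q})"
proof (induction m rule: less_induct)
  case (less m)
  define D where "D = degree q"
  define S where "S = lspan F ((\<lambda>j. a ^ j) ` {..<D})"
  have Dpos: "D > 0" unfolding D_def using root_degree_pos q(1,3) .
  have lc: "lead_coeff q \<noteq> 0" using q(1) by simp
  show ?case
  proof (cases "m < D")
    case True then show ?thesis unfolding D_def by (intro lspan_gen[OF F]) auto
  next
    case False
    have "0 = (\<Sum>i<D. coeff q i * a ^ i) + lead_coeff q * a ^ D"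
      using q(3) by (simp add: poly_altdef D_def lessThan_Suc_atMost[symmetric])
    then have lead: "lead_coeff q * a ^ D = - (\<Sum>i<D. coeff q i * a ^ i)"
      by (simp add: eq_neg_iff_add_eq_0 add.commute)
    have "a ^ D = (lead_coeff q * a ^ D) / lead_coeff q" using lc by simp
    also have "\<dots> = (\<Sum>i<D. (- coeff q i / lead_coeff q) * a ^ i)"
      unfolding lead sum_negf[symmetric] sum_divide_distrib by (rule sum.cong) auto
    finally have aD: "a ^ D = (\<Sum>i<D. (- coeff q i / lead_coeff q) * a ^ i)" .
    have "a ^ m = a ^ (m - D) * a ^ D" using False by (simp flip: power_add)
    also have "\<dots> = (\<Sum>i<D. (- coeff q i / lead_coeff q) * a ^ (m - D + i))"
      unfolding aD by (simp add: sum_distrib_left power_add mult_ac)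
    also have "\<dots> \<in> S" unfolding S_def
    proof (rule lspan_sum[OF F], rule lspan_smult[OF F])
      fix i assume i: "i \<in> {..<D}"
      show "a ^ (m - D + i) \<in> lspan F ((\<lambda>j. a ^ j) ` {..<D})"
        using less.IH[of "m - D + i"] i False Dpos by (auto simp: D_def)
      show "- coeff q i / lead_coeff q \<in> F"
        using q(2) F by (auto intro: subfield_divide subfield_uminus)
    qed
    finally show ?thesis by (simp add: S_def D_def)
  qed
qed

(* Adjoining one element to a subfield F that is finite over K, inside an extension
   that is algebraic over K, gives again a field finite over K: F(a) is the F-span of
   the powers of a below its degree. *)
lemma adjoin_one:
  fixes K :: "'a::field set"
  assumes K: "is_subfield K" and F: "is_subfield F" and KF: "K \<subseteq> F"
    and B: "finite B" and FB: "F \<subseteq> lspan K B" and alg: "\<forall>y. algebraic_over K y"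
  shows "\<exists>B'. finite B' \<and> gen_field (F \<union> {a}) \<subseteq> lspan K B'"
proof -
  obtain q where q: "q \<noteq> 0" "\<forall>i. coeff q i \<in> K" "poly q a = 0"
    using alg unfolding algebraic_over_def by blast
  have qF: "\<forall>i. coeff q i \<in> F" using q(2) KF by auto
  define Pw where "Pw = (\<lambda>j. a ^ j) ` {..<degree q}"
  define S where "S = lspan F Pw"
  have pw: "a ^ m \<in> S" for m unfolding S_def Pw_def by (rule powers_in_span[OF F q(1) qF q(3)])
  have "b * b' \<in> S" if "b \<in> Pw" "b' \<in> Pw" for b b'
    using that pw unfolding Pw_def by (auto simp flip: power_add)
  then have Smul: "u * v \<in> S" if "u \<in> S" "v \<in> S" for u v
    using lspan_mult[OF F _ that[unfolded S_def]] unfolding S_def by blast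
  have FS: "F \<subseteq> S"
  proof
    fix f assume "f \<in> F"
    then have "f * 1 \<in> S" using pw[of 0] unfolding S_def by (intro lspan_smult[OF F]) auto
    then show "f \<in> S" by simp
  qed
  have "is_subfield S"
  proof (rule algebraic_ring_is_subfield[OF K _ _ Smul])
    show "K \<subseteq> S" using KF FS by auto
    show "u + v \<in> S" if "u \<in> S" "v \<in> S" for u v using that unfolding S_def by (rule lspan_add[OF F])
    show "- u \<in> S" if "u \<in> S" for u
      using lspan_diff[OF F lspan_zero[OF F] that[unfolded S_def]] unfolding S_def by simp
  qed (use alg in auto)
  then have "gen_field (F \<union> {a}) \<subseteq> S"
    by (rule gen_field_least) (use FS pw[of 1] in auto)
  moreover have "S \<subseteq> lspan K ((\<lambda>(b, c). b * c) ` (B \<times> Pw))"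
    unfolding S_def using B by (intro lspan_tower[OF K FB]) (auto simp: Pw_def)
  moreover have "finite ((\<lambda>(b, c). b * c) ` (B \<times> Pw))" using B by (simp add: Pw_def)
  ultimately show ?thesis by (meson order_trans)
qed

lemma adjoin_finite:
  fixes K :: "'a::field set"
  assumes K: "is_subfield K" and alg: "\<forall>y. algebraic_over K y" and A: "finite A"
  shows "\<exists>B. finite B \<and> gen_field (K \<union> A) \<subseteq> lspan K B"
  using A
proof (induction A rule: finite_induct)
  case empty
  have "gen_field K \<subseteq> K" by (rule gen_field_least[OF K]) auto
  moreover have "K \<subseteq> lspan K {1}"
    using lspan_smult[OF K lspan_gen[OF K, of "{1}" 1]] by force
  ultimately show ?case by auto
next
  case (insert a A)
  define F where "F = gen_field (K \<union> A)"
  obtain B where B: "finite B" "F \<subseteq> lspan K B" using insert.IH F_def by blast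
  have KF: "K \<subseteq> F" and AF: "A \<subseteq> F" using gen_field_superset[of "K \<union> A"] unfolding F_def by auto
  obtain B' where B': "finite B'" "gen_field (F \<union> {a}) \<subseteq> lspan K B'"
    using adjoin_one[OF K gen_field_subfield KF[unfolded F_def] B(1) B(2)[unfolded F_def] alg]
    unfolding F_def by blast
  have "gen_field (K \<union> insert a A) \<subseteq> gen_field (F \<union> {a})"
    by (rule gen_field_least[OF gen_field_subfield])
      (use KF AF gen_field_superset[of "F \<union> {a}"] in auto)
  then show ?case using B' by blast
qed

section \<open>Laurent series\<close>

definition vanishes_below :: "int \<Rightarrow> 'a::comm_ring_1 fls \<Rightarrow> bool" where
  "vanishes_below m f \<longleftrightarrow> (\<forall>k<m. f $$ k = 0)"

lemma vanishes_below_mono: "vanishes_below m f \<Longrightarrow> m' \<le> m \<Longrightarrow> vanishes_below m' f"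
  by (simp add: vanishes_below_def)

lemma vanishes_below_add: "vanishes_below m f \<Longrightarrow> vanishes_below m g \<Longrightarrow> vanishes_below m (f + g)"
  by (simp add: vanishes_below_def)

lemma vanishes_below_uminus: "vanishes_below m f \<Longrightarrow> vanishes_below m (- f)"
  by (simp add: vanishes_below_def)

lemma vanishes_below_subdegree: "vanishes_below (fls_subdegree f) f"
  by (simp add: vanishes_below_def)

lemma vanishes_below_subdegree_ge: "vanishes_below m f \<Longrightarrow> f \<noteq> 0 \<Longrightarrow> m \<le> fls_subdegree f"
  unfolding vanishes_below_def by (rule fls_subdegree_geI) auto

lemma vanishes_below_mult:
  assumes "vanishes_below a f" "vanishes_below b g" shows "vanishes_below (a + b) (f * g)"
proof (cases "f = 0 \<or> g = 0")
  case True then show ?thesis by (auto simp: vanishes_below_def)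
next
  case False
  then have "a \<le> fls_subdegree f" "b \<le> fls_subdegree g" using assms vanishes_below_subdegree_ge by auto
  then show ?thesis unfolding vanishes_below_def by (auto intro: fls_times_nth_eq0)
qed

lemma vanishes_below_mult_nth:
  assumes f: "vanishes_below a f" and g: "vanishes_below b g" shows "(f * g) $$ (a + b) = f $$ a * g $$ b"
proof (cases "f = 0 \<or> g = 0")
  case True then show ?thesis by auto
next
  case False
  then have ge: "a \<le> fls_subdegree f" "b \<le> fls_subdegree g" using assms vanishes_below_subdegree_ge by auto
  show ?thesis
  proof (cases "a = fls_subdegree f \<and> b = fls_subdegree g")
    case True
    then show ?thesis using fls_times_nth(2)[of f g "a + b"] by simp
  next
    case False
    then have "a < fls_subdegree f \<or> b < fls_subdegree g" using ge by auto
    then show ?thesis using ge by (auto intro!: fls_times_nth_eq0)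
  qed
qed

lemma vanishes_below_power: "vanishes_below a f \<Longrightarrow> vanishes_below (int n * a) (f ^ n)"
proof (induction n)
  case 0 then show ?case by (simp add: vanishes_below_def)
next
  case (Suc n)
  have "vanishes_below (a + int n * a) (f * f ^ n)" by (rule vanishes_below_mult[OF Suc.prems Suc.IH[OF Suc.prems]])
  then show ?case by (simp add: algebra_simps)
qed

lemma vanishes_below_sum: "(\<And>i. i \<in> I \<Longrightarrow> vanishes_below m (f i)) \<Longrightarrow> vanishes_below m (sum f I)"
  by (induction I rule: infinite_finite_induct) (auto intro: vanishes_below_add simp: vanishes_below_def)

lemma vanishes_below_exists: "finite I \<Longrightarrow> \<exists>A. \<forall>j\<in>I. vanishes_below A (f j)"
proof (induction I rule: finite_induct)
  case empty then show ?case by simp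
next
  case (insert x I)
  then obtain A where "\<forall>j\<in>I. vanishes_below A (f j)" by blast
  then show ?case using vanishes_below_subdegree[of "f x"]
    by (intro exI[of _ "min A (fls_subdegree (f x))"]) (auto intro: vanishes_below_mono)
qed

lemma laurent_overI: "(\<And>i. f $$ i \<in> F) \<Longrightarrow> f \<in> laurent_over F"
  by (simp add: laurent_over_def)

lemma laurent_overD: "f \<in> laurent_over F \<Longrightarrow> f $$ i \<in> F"
  by (simp add: laurent_over_def)

lemma laurent_over_mono: "K \<subseteq> F \<Longrightarrow> laurent_over K \<subseteq> laurent_over F"
  unfolding laurent_over_def by auto

lemma laurent_over_mult:
  assumes F: "is_subfield F" and "f \<in> laurent_over F" "g \<in> laurent_over F"
  shows "f * g \<in> laurent_over F"
proof (rule laurent_overI)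
  fix n
  show "(f * g) $$ n \<in> F" unfolding fls_times_nth(2)
    by (rule subfield_sum[OF F]) (use assms in \<open>auto intro: subfieldD laurent_overD\<close>)
qed

lemma fps_right_inverse_constructor_in:
  assumes F: "is_subfield F" and "\<And>i. f $ i \<in> F" "y \<in> F"
  shows "fps_right_inverse_constructor f y n \<in> F"
proof (induction n rule: less_induct)
  case (less n)
  show ?case
  proof (cases n)
    case 0 then show ?thesis using assms by simp
  next
    case (Suc m)
    have "sum (\<lambda>i. f$i * fps_right_inverse_constructor f y (n - i)) {1..n} \<in> F"
      by (rule subfield_sum[OF F]) (use less assms in \<open>auto intro!: subfieldD(5)[OF F]\<close>)
    then show ?thesis
      using assms Suc by (simp add: subfieldD(5)[OF F] subfield_uminus[OF F])
  qed
qed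

lemma laurent_over_inverse:
  assumes F: "is_subfield F" and f: "f \<in> laurent_over F"
  shows "inverse f \<in> laurent_over F"
proof (rule laurent_overI)
  fix n
  have y: "inverse (f $$ fls_subdegree f) \<in> F" using F f by (auto intro: subfieldD laurent_overD)
  have b: "fls_base_factor_to_fps f $ i \<in> F" for i
    using f by (simp add: fls_base_factor_to_fps_nth laurent_overD)
  show "inverse f $$ n \<in> F"
    unfolding fls_inverse_def' using fps_right_inverse_constructor_in[OF F b y] F by (simp add: subfieldD)
qed

lemma laurent_over_subfield:
  assumes F: "is_subfield F" shows "is_subfield (laurent_over F)"
  unfolding is_subfield_def
  using F laurent_over_mult[OF F] laurent_over_inverse[OF F]
  by (auto simp: laurent_over_def subfieldD)

lemma laurent_over_const: "c \<in> F \<Longrightarrow> is_subfield F \<Longrightarrow> fls_const c \<in> laurent_over F"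
  by (auto simp: laurent_over_def subfieldD)

lemma laurent_over_poly:
  assumes F: "is_subfield F" and "\<forall>i. coeff q i \<in> laurent_over F" "y \<in> laurent_over F"
  shows "poly q y \<in> laurent_over F"
  using laurent_over_subfield[OF F] assms(2,3) by (intro poly_in_closed_set) (auto intro: subfieldD)

definition fls_monom :: "'a::comm_ring_1 \<Rightarrow> int \<Rightarrow> 'a fls" where
  "fls_monom c j = fls_shift (-j) (fls_const c)"

lemma fls_monom_nth [simp]: "fls_monom c j $$ k = (if k = j then c else 0)"
  by (simp add: fls_monom_def)

lemma fls_monom_power: "fls_monom c j ^ m = fls_monom (c ^ m) (int m * j)"
  by (simp add: fls_monom_def fls_shifted_pow fls_const_power)

definition fls_trunc :: "'a::comm_ring_1 fls \<Rightarrow> int \<Rightarrow> 'a fls" where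
  "fls_trunc f N = (\<Sum>j\<in>{fls_subdegree f..<N}. fls_monom (f $$ j) j)"

lemma fls_trunc_nth: "fls_trunc f N $$ k = (if k < N then f $$ k else 0)"
proof -
  have "fls_trunc f N $$ k = (\<Sum>j\<in>{fls_subdegree f..<N}. if k = j then f $$ j else 0)"
    by (simp add: fls_trunc_def fls_nth_sum)
  also have "\<dots> = (if k \<in> {fls_subdegree f..<N} then f $$ k else 0)"
    by (simp add: sum.delta)
  also have "\<dots> = (if k < N then f $$ k else 0)" by auto
  finally show ?thesis .
qed

lemma vanishes_below_trunc_diff: "vanishes_below N (f - fls_trunc f N)"
  by (simp add: vanishes_below_def fls_trunc_nth)

lemma vanishes_below_trunc: "vanishes_below m f \<Longrightarrow> vanishes_below m (fls_trunc f N)"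
  by (simp add: vanishes_below_def fls_trunc_nth)

lemma fls_trunc_laurent_over:
  "(\<And>k. k < N \<Longrightarrow> f $$ k \<in> F) \<Longrightarrow> 0 \<in> F \<Longrightarrow> fls_trunc f N \<in> laurent_over F"
  by (auto simp: laurent_over_def fls_trunc_nth)

section \<open>Frobenius powers\<close>

(* frob_exp p n is p^n in characteristic p > 0 and 1 in characteristic 0, so that
   x \<mapsto> x ^ frob_exp CHAR('a) n is an injective ring endomorphism. *)
definition frob_exp :: "nat \<Rightarrow> nat \<Rightarrow> nat" where
  "frob_exp p n = (if p = 0 then 1 else p ^ n)"

lemma frob_exp_pos: "frob_exp p n > 0"
  by (simp add: frob_exp_def)

lemma frob_exp_Suc: "p > 0 \<Longrightarrow> frob_exp p (Suc n) = frob_exp p n * p"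
  by (simp add: frob_exp_def)

lemma frob_pow_set_eq:
  fixes L :: "'a::field set"
  shows "frob_pow_set n L = (\<lambda>f. f ^ frob_exp CHAR('a) n) ` L"
  by (simp add: frob_pow_set_def frob_exp_def)

lemma frob_add:
  fixes x y :: "'b::idom"
  shows "(x + y) ^ frob_exp CHAR('b) n = x ^ frob_exp CHAR('b) n + y ^ frob_exp CHAR('b) n"
proof (cases "CHAR('b) = 0")
  case True then show ?thesis by (simp add: frob_exp_def)
next
  case False
  then have "prime CHAR('b)" by (intro prime_CHAR_semidom) simp
  then show ?thesis using False by (simp add: frob_exp_def freshmans_dream')
qed

lemma frob_sum:
  fixes f :: "'c \<Rightarrow> 'b::idom"
  shows "(sum f A) ^ frob_exp CHAR('b) n = (\<Sum>i\<in>A. f i ^ frob_exp CHAR('b) n)"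
proof (cases "CHAR('b) = 0")
  case True then show ?thesis by (simp add: frob_exp_def)
next
  case False
  then have "prime CHAR('b)" by (intro prime_CHAR_semidom) simp
  then show ?thesis using False by (simp add: frob_exp_def freshmans_dream_sum')
qed

lemma frob_preimage_subfield:
  fixes \<Omega> :: "'a::field set"
  assumes Om: "is_subfield \<Omega>"
  shows "is_subfield {y. y ^ frob_exp CHAR('a) n \<in> \<Omega>}"
proof -
  define q where "q = frob_exp CHAR('a) n"
  have qpos: "q > 0" unfolding q_def by (rule frob_exp_pos)
  have add: "(x + y) ^ q = x ^ q + y ^ q" for x y :: 'a unfolding q_def by (rule frob_add)
  have sub: "(x - y) ^ q = x ^ q - y ^ q" for x y :: 'a
    using add[of "x - y" y] by (simp add: algebra_simps)
  show ?thesis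
    unfolding is_subfield_def q_def[symmetric]
    using Om qpos by (auto simp: add sub power_mult_distrib power_inverse power_0_left intro: subfieldD)
qed

lemma frob_trunc_nth:
  fixes \<sigma> :: "'a::field fls" and n :: nat
  defines "q \<equiv> frob_exp CHAR('a) n"
  shows "(fls_trunc \<sigma> N ^ q) $$ k =
    (\<Sum>j\<in>{fls_subdegree \<sigma>..<N}. if k = int q * j then (\<sigma> $$ j) ^ q else 0)"
proof -
  have q: "q = frob_exp CHAR('a fls) n" by (simp add: q_def)
  have "fls_trunc \<sigma> N ^ q = (\<Sum>j\<in>{fls_subdegree \<sigma>..<N}. fls_monom ((\<sigma> $$ j) ^ q) (int q * j))"
    unfolding fls_trunc_def q frob_sum by (simp add: fls_monom_power)
  then show ?thesis by (simp add: fls_nth_sum)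
qed

lemma frob_trunc_agree:
  fixes \<sigma> :: "'a::field fls" and n :: nat
  defines "q \<equiv> frob_exp CHAR('a) n"
  assumes k: "k < int q * N"
  shows "(\<sigma> ^ q) $$ k = (fls_trunc \<sigma> N ^ q) $$ k"
proof -
  define h where "h = \<sigma> - fls_trunc \<sigma> N"
  have "\<sigma> ^ q = (fls_trunc \<sigma> N + h) ^ q" by (simp add: h_def)
  also have "\<dots> = fls_trunc \<sigma> N ^ q + h ^ q"
    using frob_add[of "fls_trunc \<sigma> N" h n] by (simp add: q_def)
  finally have split: "(\<sigma> ^ q) $$ k = (fls_trunc \<sigma> N ^ q) $$ k + (h ^ q) $$ k" by simp
  have "vanishes_below (int q * N) (h ^ q)"
    unfolding h_def by (intro vanishes_below_power vanishes_below_trunc_diff)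
  then show ?thesis using split k unfolding vanishes_below_def by simp
qed

lemma frob_nth:
  fixes \<sigma> :: "'a::field fls" and n :: nat
  defines "q \<equiv> frob_exp CHAR('a) n"
  shows "(\<sigma> ^ q) $$ k = (if int q dvd k then (\<sigma> $$ (k div int q)) ^ q else 0)"
proof -
  have qpos: "q > 0" unfolding q_def by (rule frob_exp_pos)
  define N where "N = \<bar>k\<bar> + 1"
  have "k < int q * N" using qpos unfolding N_def
    by (smt (verit, ccfv_SIG) mult_le_cancel_right1 of_nat_0_less_iff)
  then have eq: "(\<sigma> ^ q) $$ k =
      (\<Sum>j\<in>{fls_subdegree \<sigma>..<N}. if k = int q * j then (\<sigma> $$ j) ^ q else 0)"
    unfolding q_def by (simp add: frob_trunc_agree frob_trunc_nth)
  show ?thesis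
  proof (cases "int q dvd k")
    case True
    then obtain i where i: "k = int q * i" by blast
    have "i < N" unfolding N_def using i qpos
      by (smt (verit) mult_le_cancel_right1 mult_minus_right of_nat_0_less_iff)
    moreover have "i < fls_subdegree \<sigma> \<Longrightarrow> (\<sigma> $$ i) ^ q = 0" using qpos by simp
    moreover have "(\<Sum>j\<in>{fls_subdegree \<sigma>..<N}. if k = int q * j then (\<sigma> $$ j) ^ q else 0)
        = (if i \<in> {fls_subdegree \<sigma>..<N} then (\<sigma> $$ i) ^ q else 0)"
      using i qpos by simp
    ultimately show ?thesis using eq True i qpos by auto
  next
    case False
    have "(\<Sum>j\<in>{fls_subdegree \<sigma>..<N}. if k = int q * j then (\<sigma> $$ j) ^ q else 0) = 0"
      by (rule sum.neutral) (use False in auto)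
    then show ?thesis using eq False by simp
  qed
qed

section \<open>Divided differences of polynomials\<close>

(* diff_quot P y z = (P(y) - P(z)) / (y - z), written as a polynomial expression so that
   it makes sense for y = z, where it equals P'(y). *)
definition diff_quot :: "'a::comm_ring_1 poly \<Rightarrow> 'a \<Rightarrow> 'a \<Rightarrow> 'a" where
  "diff_quot P y z = (\<Sum>j\<le>degree P. coeff P j * (\<Sum>l<j. z ^ (j - Suc l) * y ^ l))"

lemma diff_quot_eq: "poly P y - poly P z = (y - z) * diff_quot P y z"
proof -
  have "poly P y - poly P z = (\<Sum>j\<le>degree P. coeff P j * (y ^ j - z ^ j))"
    by (simp add: poly_altdef sum_subtractf right_diff_distrib)
  also have "\<dots> = (\<Sum>j\<le>degree P. coeff P j * ((y - z) * (\<Sum>l<j. z ^ (j - Suc l) * y ^ l)))"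
    by (simp add: power_diff_sumr2)
  also have "\<dots> = (y - z) * diff_quot P y z"
    by (simp add: diff_quot_def sum_distrib_left mult_ac)
  finally show ?thesis .
qed

lemma poly_altdef_le: "degree p \<le> n \<Longrightarrow> poly p x = (\<Sum>i\<le>n. coeff p i * x ^ i)"
  for p :: "'a::comm_ring_1 poly"
proof -
  assume "degree p \<le> n"
  then have "poly p x = poly (\<Sum>i\<le>n. monom (coeff p i) i) x" by (simp add: poly_as_sum_of_monoms')
  also have "\<dots> = (\<Sum>i\<le>n. coeff p i * x ^ i)" by (simp add: poly_sum poly_monom)
  finally show ?thesis .
qed

lemma diff_quot_diag: "diff_quot P y y = poly (pderiv P) y"
proof -
  define d where "d = degree P"
  define f where "f j = coeff P j * (of_nat j * y ^ (j - 1))" for j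
  have "(\<Sum>l<j. y ^ (j - Suc l) * y ^ l) = of_nat j * y ^ (j - 1)" for j
  proof -
    have "(\<Sum>l<j. y ^ (j - Suc l) * y ^ l) = (\<Sum>l<j. y ^ (j - 1))"
      by (rule sum.cong) (auto simp flip: power_add)
    then show ?thesis by simp
  qed
  then have "diff_quot P y y = (\<Sum>j\<le>d. f j)" by (simp add: diff_quot_def d_def f_def)
  also have "\<dots> = (\<Sum>j\<le>Suc d. f j)" by (simp add: f_def d_def coeff_eq_0)
  also have "\<dots> = f 0 + (\<Sum>i\<le>d. f (Suc i))" by (rule sum.atMost_Suc_shift)
  also have "\<dots> = (\<Sum>i\<le>d. coeff (pderiv P) i * y ^ i)" by (simp add: f_def coeff_pderiv mult_ac)
  also have "\<dots> = poly (pderiv P) y"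
  proof -
    have "degree (pderiv P) \<le> d" by (rule degree_le) (simp add: coeff_pderiv d_def coeff_eq_0)
    then show ?thesis by (simp add: poly_altdef_le)
  qed
  finally show ?thesis .
qed

lemma diff_quot_in:
  assumes S: "is_subfield S" and "\<forall>j. coeff P j \<in> S" "y \<in> S" "z \<in> S"
  shows "diff_quot P y z \<in> S"
  unfolding diff_quot_def using assms
  by (intro subfield_sum[OF S] subfieldD(5)[OF S] subfield_power[OF S]) auto

lemma vanishes_below_power_diff:
  assumes B: "B \<le> 0" and y: "vanishes_below B y" and y': "vanishes_below B y'"
    and m: "vanishes_below m (y - y')"
  shows "vanishes_below (m + int k * B) (y ^ k - y' ^ k)"
proof -
  have "vanishes_below (int k * B) (\<Sum>i<k. y' ^ (k - Suc i) * y ^ i)"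
  proof (rule vanishes_below_sum)
    fix i assume i: "i \<in> {..<k}"
    have "vanishes_below (int (k - Suc i) * B + int i * B) (y' ^ (k - Suc i) * y ^ i)"
      by (intro vanishes_below_mult vanishes_below_power y y')
    moreover have "int k * B \<le> int (k - Suc i) * B + int i * B"
      using i B by (simp add: of_nat_diff flip: distrib_right) (simp add: mult_right_mono_neg)
    ultimately show "vanishes_below (int k * B) (y' ^ (k - Suc i) * y ^ i)" by (rule vanishes_below_mono)
  qed
  then show ?thesis using vanishes_below_mult[OF m] by (simp add: power_diff_sumr2)
qed

lemma diff_quot_vanishes_below_diff:
  fixes P :: "'a::field fls poly"
  assumes B: "B \<le> 0" and A: "\<forall>j. vanishes_below A (coeff P j)"
    and yb: "vanishes_below B y" "vanishes_below B y'" "vanishes_below B z" "vanishes_below B z'"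
    and m: "vanishes_below m (y - y')" "vanishes_below m (z - z')"
  shows "vanishes_below (m + A + int (degree P) * B) (diff_quot P y z - diff_quot P y' z')"
proof -
  define d where "d = degree P"
  have "diff_quot P y z - diff_quot P y' z' =
      (\<Sum>j\<le>d. coeff P j * (\<Sum>l<j. z ^ (j - Suc l) * y ^ l - z' ^ (j - Suc l) * y' ^ l))"
    by (simp add: diff_quot_def d_def sum_subtractf right_diff_distrib)
  also have "vanishes_below (m + A + int d * B) \<dots>"
  proof (rule vanishes_below_sum)
    fix j assume j: "j \<in> {..d}"
    have inner: "vanishes_below (m + int d * B) (z ^ a * y ^ l - z' ^ a * y' ^ l)"
      if al: "a + l \<le> d" for a l
    proof -
      have e: "z ^ a * y ^ l - z' ^ a * y' ^ l = (z ^ a - z' ^ a) * y ^ l + z' ^ a * (y ^ l - y' ^ l)"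
        by (simp add: algebra_simps)
      have "vanishes_below (m + int a * B + int l * B) ((z ^ a - z' ^ a) * y ^ l)"
        by (intro vanishes_below_mult vanishes_below_power_diff vanishes_below_power B yb m)
      moreover have "vanishes_below (int a * B + (m + int l * B)) (z' ^ a * (y ^ l - y' ^ l))"
        by (intro vanishes_below_mult vanishes_below_power_diff vanishes_below_power B yb m)
      ultimately have "vanishes_below (m + int a * B + int l * B) (z ^ a * y ^ l - z' ^ a * y' ^ l)"
        unfolding e by (intro vanishes_below_add) (auto simp: algebra_simps)
      moreover have "m + int d * B \<le> m + int a * B + int l * B"
        using al B by (simp flip: distrib_right add.assoc) (simp add: mult_right_mono_neg)
      ultimately show ?thesis by (rule vanishes_below_mono)
    qed
    have "vanishes_below (A + (m + int d * B))
        (coeff P j * (\<Sum>l<j. z ^ (j - Suc l) * y ^ l - z' ^ (j - Suc l) * y' ^ l))"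
      using j by (intro vanishes_below_mult A[rule_format] vanishes_below_sum inner) auto
    then show "vanishes_below (m + A + int d * B)
        (coeff P j * (\<Sum>l<j. z ^ (j - Suc l) * y ^ l - z' ^ (j - Suc l) * y' ^ l))"
      by (simp add: algebra_simps)
  qed
  finally show ?thesis by (simp add: d_def)
qed

section \<open>Coefficients of a simple root\<close>

lemma diff_quot_trunc_approx:
  fixes P :: "'a::field fls poly" and \<tau> :: "'a fls"
  shows "\<exists>C. \<forall>N. vanishes_below (N + C) (diff_quot P (fls_trunc \<tau> N) \<tau> - diff_quot P \<tau> \<tau>) \<and>
    vanishes_below (N + C) (diff_quot P (fls_trunc \<tau> N) (fls_trunc \<tau> N) - diff_quot P \<tau> \<tau>)"
proof -
  obtain A where A0: "\<forall>j\<in>{..degree P}. vanishes_below A (coeff P j)"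
    using vanishes_below_exists[OF finite_atMost] by blast
  have A: "\<forall>j. vanishes_below A (coeff P j)"
    using A0 by (metis atMost_iff coeff_eq_0 not_le_imp_less vanishes_below_def fls_zero_nth)
  define B where "B = min (fls_subdegree \<tau>) 0"
  have B0: "B \<le> 0" by (simp add: B_def)
  have Bt: "vanishes_below B \<tau>"
    using vanishes_below_subdegree[of \<tau>] by (rule vanishes_below_mono) (simp add: B_def)
  have "vanishes_below (N + (A + int (degree P) * B)) (diff_quot P (fls_trunc \<tau> N) z - diff_quot P \<tau> \<tau>)"
    if "z \<in> {\<tau>, fls_trunc \<tau> N}" for N z
  proof -
    have t1: "vanishes_below N (fls_trunc \<tau> N - \<tau>)"
      using vanishes_below_uminus[OF vanishes_below_trunc_diff[of N \<tau>]] by simp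
    have "vanishes_below N (z - \<tau>)" "vanishes_below B z"
      using that t1 vanishes_below_trunc[OF Bt] Bt by (auto simp: vanishes_below_def)
    then show ?thesis
      using diff_quot_vanishes_below_diff[OF B0 A vanishes_below_trunc[OF Bt] Bt _ Bt t1]
      by (simp add: add.assoc)
  qed
  then show ?thesis by blast
qed

lemma leading_coeff_stable:
  assumes "vanishes_below (e + 1) (H - G)" "vanishes_below e G"
  shows "H $$ e = G $$ e" "vanishes_below e H"
proof -
  have "vanishes_below e (H - G)" using assms(1) by (rule vanishes_below_mono) simp
  then show "vanishes_below e H" using vanishes_below_add[OF assms(2)] by fastforce
  show "H $$ e = G $$ e" using assms(1) by (simp add: vanishes_below_def)
qed

(* The recursion step: if tau is a root of P, the coefficients of tau below i lie in
   the field Omega, and the divided difference at (tau truncated below i, tau) has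
   order e with leading coefficient lam in Omega, then the coefficient of x^(i+e) in
   P(truncation) = -(tau - truncation) * diff_quot gives tau_i \<in> Omega. *)
lemma hensel_next_coeff:
  fixes P :: "'a::field fls poly"
  assumes Om: "is_subfield \<Omega>" and cP: "\<forall>j. coeff P j \<in> laurent_over \<Omega>"
    and root: "poly P \<tau> = 0" and below: "\<And>k. k < i \<Longrightarrow> \<tau> $$ k \<in> \<Omega>"
    and G: "vanishes_below e (diff_quot P (fls_trunc \<tau> i) \<tau>)"
    and lam: "diff_quot P (fls_trunc \<tau> i) \<tau> $$ e = lam" "lam \<in> \<Omega>" "lam \<noteq> 0"
  shows "\<tau> $$ i \<in> \<Omega>"
proof -
  define u where "u = fls_trunc \<tau> i"
  define h where "h = \<tau> - u"
  have uO: "u \<in> laurent_over \<Omega>" unfolding u_def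
    by (rule fls_trunc_laurent_over) (use below subfieldD(1)[OF Om] in auto)
  have "poly P u = poly P u - poly P \<tau>" using root by simp
  also have "\<dots> = (u - \<tau>) * diff_quot P u \<tau>" by (rule diff_quot_eq)
  finally have Pu: "poly P u = - (h * diff_quot P u \<tau>)" by (simp add: h_def algebra_simps)
  have "h $$ i = \<tau> $$ i" by (simp add: h_def u_def fls_trunc_nth)
  then have "(poly P u) $$ (i + e) = - (\<tau> $$ i * lam)"
    unfolding Pu using vanishes_below_mult_nth[OF vanishes_below_trunc_diff G] lam(1)
    by (simp add: h_def u_def)
  then have "\<tau> $$ i = - ((poly P u) $$ (i + e)) / lam" using lam(3) by (simp add: field_simps)
  moreover have "(poly P u) $$ (i + e) \<in> \<Omega>"
    using laurent_over_poly[OF Om cP uO] by (rule laurent_overD)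
  ultimately show ?thesis using lam(2) Om by (simp add: subfield_divide subfield_uminus)
qed

lemma int_strong_induct_from:
  fixes P :: "int \<Rightarrow> bool"
  assumes base: "\<And>k. k < N0 \<Longrightarrow> P k"
    and step: "\<And>i. N0 \<le> i \<Longrightarrow> (\<And>k. k < i \<Longrightarrow> P k) \<Longrightarrow> P i"
  shows "P i"
proof -
  have below: "\<forall>k<j. P k" if "N0 \<le> j" for j
    using that
  proof (induction j rule: int_ge_induct)
    case base then show ?case using assms(1) by blast
  next
    case (step j)
    then have "P j" using assms(2) by blast
    then show ?case using step.IH by (metis zless_add1_eq)
  qed
  show ?thesis
  proof (cases "i < N0")
    case False
    then have "\<forall>k<i + 1. P k" by (intro below) simp
    then show ?thesis by (meson less_add_one)
  qed (rule base)
qed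

lemma hensel_coeffs:
  fixes P :: "'a::field fls poly" and \<tau> :: "'a fls" and K :: "'a set"
  assumes K: "is_subfield K" and cP: "\<forall>j. coeff P j \<in> laurent_over K"
    and root: "poly P \<tau> = 0" and sep: "poly (pderiv P) \<tau> \<noteq> 0"
  shows "\<exists>N. \<forall>i. \<tau> $$ i \<in> gen_field (K \<union> (\<lambda>j. \<tau> $$ j) ` {fls_subdegree \<tau>..<N})"
proof -
  obtain C where C: "\<And>N. vanishes_below (N + C) (diff_quot P (fls_trunc \<tau> N) \<tau> - diff_quot P \<tau> \<tau>)"
      "\<And>N. vanishes_below (N + C) (diff_quot P (fls_trunc \<tau> N) (fls_trunc \<tau> N) - diff_quot P \<tau> \<tau>)"
    using diff_quot_trunc_approx by blast
  define G0 where "G0 = diff_quot P \<tau> \<tau>"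
  define e where "e = fls_subdegree G0"
  define lam where "lam = G0 $$ e"
  have lamnz: "lam \<noteq> 0" using sep by (simp add: lam_def e_def G0_def diff_quot_diag)
  define N0 where "N0 = e - C + 1"
  define \<Omega> where "\<Omega> = gen_field (K \<union> (\<lambda>j. \<tau> $$ j) ` {fls_subdegree \<tau>..<N0})"
  have Om: "is_subfield \<Omega>" unfolding \<Omega>_def by (rule gen_field_subfield)
  have sup: "K \<union> (\<lambda>j. \<tau> $$ j) ` {fls_subdegree \<tau>..<N0} \<subseteq> \<Omega>"
    unfolding \<Omega>_def by (rule gen_field_superset)
  have cPO: "\<forall>j. coeff P j \<in> laurent_over \<Omega>" using cP laurent_over_mono[of K \<Omega>] sup by blast
  have low: "\<tau> $$ k \<in> \<Omega>" if "k < N0" for k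
    using that sup subfieldD(1)[OF Om] by (cases "k < fls_subdegree \<tau>") auto
  have stable: "H $$ e = lam" "vanishes_below e H"
    if "N \<ge> N0" "vanishes_below (N + C) (H - G0)" for N H
  proof -
    have "vanishes_below (e + 1) (H - G0)"
      using that(2) by (rule vanishes_below_mono) (use that(1) in \<open>simp add: N0_def\<close>)
    then show "H $$ e = lam" "vanishes_below e H"
      using leading_coeff_stable vanishes_below_subdegree[of G0] unfolding lam_def e_def by auto
  qed
  have lamO: "lam \<in> \<Omega>"
  proof -
    have "fls_trunc \<tau> N0 \<in> laurent_over \<Omega>"
      by (rule fls_trunc_laurent_over) (use low subfieldD(1)[OF Om] in auto)
    then have "diff_quot P (fls_trunc \<tau> N0) (fls_trunc \<tau> N0) \<in> laurent_over \<Omega>"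
      by (intro diff_quot_in[OF laurent_over_subfield[OF Om] cPO])
    then show ?thesis using stable(1)[OF order_refl C(2)[folded G0_def]] laurent_overD by metis
  qed
  have "\<tau> $$ i \<in> \<Omega>" for i
  proof (rule int_strong_induct_from[of N0])
    show "\<tau> $$ k \<in> \<Omega>" if "k < N0" for k using low that .
    fix i assume i: "N0 \<le> i" and below: "\<And>k. k < i \<Longrightarrow> \<tau> $$ k \<in> \<Omega>"
    note approx = C(1)[of i, folded G0_def]
    show "\<tau> $$ i \<in> \<Omega>"
      using hensel_next_coeff[OF Om cPO root below stable(2)[OF i approx]
          stable(1)[OF i approx] lamO lamnz] .
  qed
  then show ?thesis unfolding \<Omega>_def by blast
qed

section \<open>Separable reduction\<close>

lemma pderiv_coeffs_in:
  assumes E: "is_subfield E" and "\<forall>j. coeff P j \<in> E"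
  shows "\<forall>j. coeff (pderiv P) j \<in> E"
proof
  fix j
  have "of_nat (Suc j) * coeff P (Suc j) \<in> E"
    by (rule subfieldD(5)[OF E subfield_of_nat[OF E]]) (use assms(2) in blast)
  then show "coeff (pderiv P) j \<in> E" by (simp only: coeff_pderiv)
qed

lemma degree_pderiv_less:
  assumes "degree P > 0" shows "degree (pderiv P) < degree P"
proof -
  have "degree (pderiv P) \<le> degree P - 1"
    by (rule degree_le) (auto simp: coeff_pderiv coeff_eq_0)
  then show ?thesis using assms by simp
qed

lemma pderiv_zero_char_dvd:
  fixes P :: "'b::field poly"
  assumes "pderiv P = 0" "coeff P j \<noteq> 0"
  shows "CHAR('b) dvd j"
proof (cases j)
  case (Suc i)
  have "of_nat (Suc i) * coeff P (Suc i) = 0" using assms(1) by (metis coeff_0 coeff_pderiv)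
  then have "of_nat j = (0::'b)" using assms(2) Suc by simp
  then show ?thesis by (simp add: of_nat_eq_0_iff_char_dvd)
qed simp

definition poly_compress :: "nat \<Rightarrow> 'a::comm_ring_1 poly \<Rightarrow> 'a poly" where
  "poly_compress c P = (\<Sum>i\<le>degree P div c. monom (coeff P (c * i)) i)"

lemma coeff_poly_compress:
  "coeff (poly_compress c P) i = (if i \<le> degree P div c then coeff P (c * i) else 0)"
  by (simp add: poly_compress_def coeff_sum)

lemma poly_compress_eval:
  fixes P :: "'a::comm_ring_1 poly"
  assumes c: "c > 0" and dvd: "\<And>j. coeff P j \<noteq> 0 \<Longrightarrow> c dvd j"
  shows "poly (poly_compress c P) (x ^ c) = poly P x"
proof -
  define M where "M = degree P div c"
  have "poly (poly_compress c P) (x ^ c) = (\<Sum>i\<le>M. coeff P (c * i) * x ^ (c * i))"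
    by (simp add: poly_compress_def M_def poly_sum poly_monom power_mult)
  also have "\<dots> = (\<Sum>j\<in>(\<lambda>i. c * i) ` {..M}. coeff P j * x ^ j)"
    using c by (subst sum.reindex) (auto simp: inj_on_def)
  also have "\<dots> = (\<Sum>j\<le>degree P. coeff P j * x ^ j)"
  proof (rule sum.mono_neutral_left)
    show "(\<lambda>i. c * i) ` {..M} \<subseteq> {..degree P}"
      using c by (auto simp: M_def) (metis div_times_less_eq_dividend le_trans mult.commute mult_le_mono2)
    show "\<forall>j\<in>{..degree P} - (\<lambda>i. c * i) ` {..M}. coeff P j * x ^ j = 0"
    proof
      fix j assume j: "j \<in> {..degree P} - (\<lambda>i. c * i) ` {..M}"
      show "coeff P j * x ^ j = 0"
      proof (rule ccontr)
        assume "coeff P j * x ^ j \<noteq> 0"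
        then have "c dvd j" using dvd[of j] by fastforce
        then obtain i where "j = c * i" by blast
        moreover have "i \<le> M"
          using j c \<open>j = c * i\<close> by (auto simp: M_def less_eq_div_iff_mult_less_eq mult.commute)
        ultimately show False using j by auto
      qed
    qed
  qed simp
  also have "\<dots> = poly P x" by (simp add: poly_altdef)
  finally show ?thesis .
qed

lemma char_p_squeeze:
  fixes P :: "'b::field poly"
  assumes p: "CHAR('b) > 0" and pd: "pderiv P = 0" and E: "is_subfield E"
    and cP: "\<forall>j. coeff P j \<in> E" and nz: "P \<noteq> 0" and root: "poly P x = 0"
  shows "\<exists>Q. Q \<noteq> 0 \<and> (\<forall>j. coeff Q j \<in> E) \<and> poly Q (x ^ CHAR('b)) = 0 \<and> degree Q < degree P"
proof -
  define c where "c = CHAR('b)"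
  define Q where "Q = poly_compress c P"
  have c2: "c \<ge> 2" using p prime_CHAR_semidom[where 'a='b] unfolding c_def
    by (metis prime_ge_2_nat)
  have dvd: "c dvd j" if "coeff P j \<noteq> 0" for j
    using pderiv_zero_char_dvd[OF pd that] by (simp add: c_def)
  have dpos: "degree P > 0" using root_degree_pos[OF nz root] .
  have cM: "c * (degree P div c) = degree P" using dvd[of "degree P"] nz by simp
  have "coeff Q (degree P div c) \<noteq> 0" using cM nz by (simp add: Q_def coeff_poly_compress)
  then have Qnz: "Q \<noteq> 0" by auto
  have "degree Q \<le> degree P div c" by (rule degree_le) (simp add: Q_def coeff_poly_compress)
  moreover have "degree P div c < degree P" using c2 dpos by simp
  ultimately have "degree Q < degree P" by linarith
  moreover have "poly Q (x ^ c) = 0" using poly_compress_eval[of c P x] dvd c2 root by (simp add: Q_def)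
  moreover have "\<forall>j. coeff Q j \<in> E" using cP E by (simp add: Q_def coeff_poly_compress subfieldD(1))
  ultimately show ?thesis using Qnz unfolding c_def by blast
qed

(* If sigma is algebraic over a subfield E of F((x)), some Frobenius power sigma^q is a
   simple root of a polynomial over E: take a relation of minimal degree among all
   Frobenius powers; its derivative cannot vanish at the root (minimality), nor
   identically (compression would lower the degree). *)
lemma sep_reduction:
  fixes \<sigma> :: "'a::field fls" and E :: "'a fls set"
  assumes E: "is_subfield E" and alg: "algebraic_over E \<sigma>"
  shows "\<exists>n P. P \<noteq> 0 \<and> (\<forall>j. coeff P j \<in> E) \<and> poly P (\<sigma> ^ frob_exp CHAR('a) n) = 0
           \<and> poly (pderiv P) (\<sigma> ^ frob_exp CHAR('a) n) \<noteq> 0"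
proof -
  define Q where "Q k \<longleftrightarrow> (\<exists>n P. P \<noteq> 0 \<and> (\<forall>j. coeff P j \<in> E) \<and>
      poly P (\<sigma> ^ frob_exp CHAR('a) n) = 0 \<and> degree P = k)" for k
  obtain P0 where P0: "P0 \<noteq> 0" "\<forall>j. coeff P0 j \<in> E" "poly P0 \<sigma> = 0"
    using alg unfolding algebraic_over_def by blast
  have "Q (degree P0)" unfolding Q_def using P0 by (intro exI[of _ 0] exI[of _ P0]) (simp add: frob_exp_def)
  then obtain k where k: "Q k" "\<And>k'. Q k' \<Longrightarrow> k \<le> k'" by (metis LeastI Least_le)
  then obtain n P where P: "P \<noteq> 0" "\<forall>j. coeff P j \<in> E" "poly P (\<sigma> ^ frob_exp CHAR('a) n) = 0" "degree P = k"
    unfolding Q_def by blast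
  define x where "x = \<sigma> ^ frob_exp CHAR('a) n"
  have dpos: "degree P > 0" using root_degree_pos[OF P(1) P(3)] .
  have "poly (pderiv P) x \<noteq> 0"
  proof
    assume z: "poly (pderiv P) x = 0"
    consider "pderiv P \<noteq> 0" | "pderiv P = 0" "CHAR('a) = 0" | "pderiv P = 0" "CHAR('a) > 0" by blast
    then show False
    proof cases
      case 1
      then have "Q (degree (pderiv P))" unfolding Q_def using z pderiv_coeffs_in[OF E P(2)]
        by (intro exI[of _ n] exI[of _ "pderiv P"]) (simp add: x_def)
      then show False using k(2) degree_pderiv_less[OF dpos] P(4) by fastforce
    next
      case 2
      then show False using pderiv_zero_char_dvd[of P "degree P"] dpos P(1)
        by (simp add: dvd_imp_le)
    next
      case 3
      then have "CHAR('a fls) > 0" by simp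
      then obtain R where R: "R \<noteq> 0" "\<forall>j. coeff R j \<in> E" "poly R (x ^ CHAR('a fls)) = 0"
          "degree R < degree P"
        using char_p_squeeze[OF _ 3(1) E P(2) P(1)] P(3) unfolding x_def by blast
      have "x ^ CHAR('a fls) = \<sigma> ^ frob_exp CHAR('a) (Suc n)"
        using 3 by (simp add: x_def frob_exp_Suc power_mult)
      then have "Q (degree R)" unfolding Q_def using R by (intro exI[of _ "Suc n"] exI[of _ R]) simp
      then show False using k(2) R(4) P(4) by fastforce
    qed
  qed
  then show ?thesis using P unfolding x_def by blast
qed

section \<open>Necessity: algebraic series have finitely generated Frobenius coefficient fields\<close>

lemma frob_coeff_field_subset:
  fixes \<sigma> :: "'a::field fls"
  assumes K: "is_subfield K" and Om: "is_subfield \<Omega>" and KOm: "K \<subseteq> \<Omega>"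
    and coeffs: "\<And>i. (\<sigma> ^ frob_exp CHAR('a) n) $$ i \<in> \<Omega>"
  shows "gen_field (K \<union> frob_pow_set n (gen_field (K \<union> range (fls_nth \<sigma>)))) \<subseteq> \<Omega>"
proof -
  define q where "q = frob_exp CHAR('a) n"
  define T where "T = {y. y ^ q \<in> \<Omega>}"
  have T: "is_subfield T" unfolding T_def q_def by (rule frob_preimage_subfield[OF Om])
  have KT: "K \<subseteq> T" unfolding T_def using KOm subfield_power[OF K] by blast
  have "\<sigma> $$ i \<in> T" for i
    using coeffs[of "int q * i"] frob_nth[of \<sigma> n "int q * i"] frob_exp_pos[of "CHAR('a)" n]
    by (simp add: T_def q_def)
  then have "gen_field (K \<union> range (fls_nth \<sigma>)) \<subseteq> T" using KT by (intro gen_field_least[OF T]) auto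
  then have "frob_pow_set n (gen_field (K \<union> range (fls_nth \<sigma>))) \<subseteq> \<Omega>"
    unfolding frob_pow_set_eq q_def[symmetric] T_def by blast
  then show ?thesis using KOm by (intro gen_field_least[OF Om]) blast
qed

lemma necessity:
  fixes K :: "'a::field set" and \<sigma> :: "'a fls"
  assumes K: "is_subfield K" and algK: "\<forall>a. algebraic_over K a"
    and alg: "algebraic_over (laurent_over K) \<sigma>"
  shows "\<exists>n::nat. finite_degree K
       (gen_field (K \<union> frob_pow_set n (gen_field (K \<union> range (fls_nth \<sigma>)))))"
proof -
  obtain n P where P: "P \<noteq> 0" "\<forall>j. coeff P j \<in> laurent_over K"
      "poly P (\<sigma> ^ frob_exp CHAR('a) n) = 0" "poly (pderiv P) (\<sigma> ^ frob_exp CHAR('a) n) \<noteq> 0"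
    using sep_reduction[OF laurent_over_subfield[OF K] alg] by blast
  define \<tau> where "\<tau> = \<sigma> ^ frob_exp CHAR('a) n"
  obtain N where N: "\<forall>i. \<tau> $$ i \<in> gen_field (K \<union> (\<lambda>j. \<tau> $$ j) ` {fls_subdegree \<tau>..<N})"
    using hensel_coeffs[OF K P(2) P(3) P(4)] unfolding \<tau>_def by blast
  define \<Omega> where "\<Omega> = gen_field (K \<union> (\<lambda>j. \<tau> $$ j) ` {fls_subdegree \<tau>..<N})"
  obtain B where B: "finite B" "\<Omega> \<subseteq> lspan K B"
    using adjoin_finite[OF K algK] unfolding \<Omega>_def by blast
  have "K \<subseteq> \<Omega>" using gen_field_superset unfolding \<Omega>_def by blast
  then have "gen_field (K \<union> frob_pow_set n (gen_field (K \<union> range (fls_nth \<sigma>)))) \<subseteq> \<Omega>"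
    using frob_coeff_field_subset[OF K gen_field_subfield] N unfolding \<Omega>_def \<tau>_def by blast
  then show ?thesis using B by (blast intro: finite_degree_of_subset[OF K B(1)])
qed

section \<open>Sufficiency: finite Frobenius coefficient fields give algebraic series\<close>

lemma fls_const_sum: "fls_const (sum f A) = (\<Sum>a\<in>A. fls_const (f a) :: 'a::comm_ring_1 fls)"
  by (induction A rule: infinite_finite_induct) (simp_all add: fls_plus_const[symmetric])

lemma const_lift:
  fixes K :: "'a::field set"
  assumes K: "is_subfield K" and Bs: "finite Bs" and x: "x \<in> lspan K Bs"
  shows "fls_const x \<in> lspan (laurent_over K) (fls_const ` Bs)"
proof -
  have E: "is_subfield (laurent_over K)" by (rule laurent_over_subfield[OF K])
  obtain c where c: "x = (\<Sum>b\<in>Bs. c b * b)" "\<forall>b\<in>Bs. c b \<in> K" using x by (rule lspanE)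
  have "fls_const x = (\<Sum>b\<in>Bs. fls_const (c b) * fls_const b)" by (simp add: c fls_const_sum)
  also have "\<dots> \<in> lspan (laurent_over K) (fls_const ` Bs)"
    by (rule lspan_sum[OF E], rule lspan_smult[OF E])
      (use Bs c K in \<open>auto intro: lspan_gen[OF E] laurent_over_const\<close>)
  finally show ?thesis .
qed

lemma series_in_const_span:
  fixes K :: "'a::field set"
  assumes K: "is_subfield K" and Bs: "finite Bs" and coeffs: "\<And>k. \<tau> $$ k \<in> lspan K Bs"
  shows "\<tau> \<in> lspan (laurent_over K) (fls_const ` Bs)"
proof -
  define E where "E = laurent_over K"
  have E: "is_subfield E" unfolding E_def by (rule laurent_over_subfield[OF K])
  have "\<forall>k. \<exists>c. (\<forall>b\<in>Bs. c b \<in> K) \<and> \<tau> $$ k = (\<Sum>b\<in>Bs. c b * b)"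
    using coeffs unfolding lspan_def by blast
  then obtain cc where cc: "\<And>k. (\<forall>b\<in>Bs. cc k b \<in> K) \<and> \<tau> $$ k = (\<Sum>b\<in>Bs. cc k b * b)"
    by metis
  define s where "s = fls_subdegree \<tau>"
  define g where "g b = fls_shift (-s) (fps_to_fls (Abs_fps (\<lambda>i. cc (s + int i) b)))" for b
  have g_nth: "g b $$ k = (if k < s then 0 else cc k b)" for b k by (simp add: g_def)
  have gE: "g b \<in> E" if "b \<in> Bs" for b
    unfolding E_def using cc that subfieldD(1)[OF K] by (intro laurent_overI) (auto simp: g_nth)
  have "\<tau> $$ k = (\<Sum>b\<in>Bs. g b * fls_const b) $$ k" for k
  proof -
    have "(\<Sum>b\<in>Bs. g b * fls_const b) $$ k = (\<Sum>b\<in>Bs. b * g b $$ k)"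
      by (simp add: fls_nth_sum mult.commute[of _ "fls_const _"])
    also have "\<dots> = \<tau> $$ k"
    proof (cases "k < s")
      case True then show ?thesis by (simp add: g_nth s_def)
    next
      case False
      then have "(\<Sum>b\<in>Bs. b * g b $$ k) = (\<Sum>b\<in>Bs. cc k b * b)" by (simp add: g_nth mult.commute)
      then show ?thesis using cc[of k] by simp
    qed
    finally show ?thesis by simp
  qed
  then have "\<tau> = (\<Sum>b\<in>Bs. g b * fls_const b)" by (simp add: fls_eq_iff)
  also have "\<dots> \<in> lspan E (fls_const ` Bs)"
    by (rule lspan_sum[OF E], rule lspan_smult[OF E]) (use gE Bs in \<open>auto intro: lspan_gen[OF E]\<close>)
  finally show ?thesis by (simp add: E_def)
qed

(* An element of a finite-dimensional E-algebra (a finite span containing 1 and closed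
   under products) is algebraic over E: its powers are linearly dependent. *)
lemma algebraic_of_finite_algebra:
  assumes E: "is_subfield E" and V: "finite V"
    and one: "1 \<in> lspan E V" and x: "x \<in> lspan E V"
    and VV: "\<And>b b'. b \<in> V \<Longrightarrow> b' \<in> V \<Longrightarrow> b * b' \<in> lspan E V"
  shows "algebraic_over E x"
proof -
  have pw: "x ^ j \<in> lspan E V" for j
    by (induction j) (use one lspan_mult[OF E VV x] in auto)
  obtain c where c: "\<forall>j\<in>{..card V}. c j \<in> E" "\<exists>j\<in>{..card V}. c j \<noteq> 0"
      "(\<Sum>j\<in>{..card V}. c j * x ^ j) = 0"
    using lin_dep[OF E V finite_atMost, of "card V" "\<lambda>j. x ^ j"] pw by auto
  define R where "R = (\<Sum>j\<le>card V. monom (c j) j)"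
  have cR: "coeff R i = (if i \<le> card V then c i else 0)" for i
    by (simp add: R_def coeff_sum coeff_monom)
  have "R \<noteq> 0" using c(2) cR by (metis coeff_0 atMost_iff)
  moreover have "\<forall>i. coeff R i \<in> E" using c(1) E by (simp add: cR subfieldD(1))
  moreover have "poly R x = 0" using c(3) by (simp add: R_def poly_sum poly_monom)
  ultimately show ?thesis unfolding algebraic_over_def by blast
qed

(* If x^q is algebraic (q > 0), so is x: substitute X^q into the relation. *)
lemma algebraic_of_power:
  assumes E: "is_subfield E" and q: "q > 0" and alg: "algebraic_over E (x ^ q)"
  shows "algebraic_over E x"
proof -
  obtain R0 where R0: "R0 \<noteq> 0" "\<forall>i. coeff R0 i \<in> E" "poly R0 (x ^ q) = 0"
    using alg unfolding algebraic_over_def by blast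
  define R where "R = pcompose R0 (monom 1 q)"
  have "R \<noteq> 0" using pcompose_eq_0[of R0 "monom 1 q"] R0(1) q by (auto simp: R_def degree_monom_eq)
  moreover have "coeff R i \<in> E" for i
    unfolding R_def using E R0(2)
    by (intro coeff_pcompose_semiring_closed) (auto simp: coeff_monom intro: subfieldD)
  moreover have "poly R x = 0" using R0(3) by (simp add: R_def poly_pcompose poly_monom)
  ultimately show ?thesis unfolding algebraic_over_def by blast
qed

(* If K L^q has finite degree over K, then sigma^q lies in a finite-dimensional
   K((x))-algebra spanned by constants, hence sigma^q and sigma are algebraic. *)
lemma sufficiency:
  fixes K :: "'a::field set" and \<sigma> :: "'a fls"
  assumes K: "is_subfield K"
    and fd: "finite_degree K (gen_field (K \<union> frob_pow_set n (gen_field (K \<union> range (fls_nth \<sigma>)))))"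
  shows "algebraic_over (laurent_over K) \<sigma>"
proof -
  define M where "M = gen_field (K \<union> frob_pow_set n (gen_field (K \<union> range (fls_nth \<sigma>))))"
  define q where "q = frob_exp CHAR('a) n"
  define E where "E = laurent_over K"
  have Mf: "is_subfield M" unfolding M_def by (rule gen_field_subfield)
  have E: "is_subfield E" unfolding E_def by (rule laurent_over_subfield[OF K])
  obtain Bs where Bs: "finite Bs" "Bs \<subseteq> M" "M \<subseteq> lspan K Bs"
    using fd unfolding finite_degree_lspan M_def by blast
  have "(\<sigma> $$ i) ^ q \<in> M" for i
    using gen_field_superset[of "K \<union> range (fls_nth \<sigma>)"]
      gen_field_superset[of "K \<union> frob_pow_set n (gen_field (K \<union> range (fls_nth \<sigma>)))"]
    unfolding M_def q_def frob_pow_set_eq by blast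
  then have "(\<sigma> ^ q) $$ k \<in> M" for k
    using subfieldD(1)[OF Mf] unfolding q_def by (simp add: frob_nth)
  have const: "fls_const x \<in> lspan E (fls_const ` Bs)" if "x \<in> M" for x
    unfolding E_def using that Bs by (intro const_lift[OF K Bs(1)]) blast
  have "\<sigma> ^ q \<in> lspan E (fls_const ` Bs)"
    unfolding E_def using Bs \<open>\<And>k. (\<sigma> ^ q) $$ k \<in> M\<close>
    by (intro series_in_const_span[OF K Bs(1)]) blast
  moreover have "b * b' \<in> lspan E (fls_const ` Bs)"
    if bb: "b \<in> fls_const ` Bs" "b' \<in> fls_const ` Bs" for b b'
  proof -
    obtain x x' where "x \<in> Bs" "x' \<in> Bs" "b = fls_const x" "b' = fls_const x'" using bb by blast
    then show ?thesis using const[of "x * x'"] Bs(2) subfieldD(5)[OF Mf] by auto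
  qed
  moreover have "1 \<in> lspan E (fls_const ` Bs)" using const[OF subfieldD(2)[OF Mf]] by simp
  ultimately have "algebraic_over E (\<sigma> ^ q)"
    using algebraic_of_finite_algebra[OF E] Bs(1) by blast
  then show ?thesis
    unfolding E_def q_def by (rule algebraic_of_power[OF laurent_over_subfield[OF K] frob_exp_pos])
qed

theorem theorem2p5:
  fixes K :: "'a::alg_closed_field set" and \<sigma> :: "'a fls"
  assumes "is_subfield K"
    and "\<forall>a::'a. algebraic_over K a"
  shows "algebraic_over (laurent_over K) \<sigma> \<longleftrightarrow>
    (\<exists>n::nat. finite_degree K
       (gen_field (K \<union> frob_pow_set n (gen_field (K \<union> range (fls_nth \<sigma>))))))"
  using necessity[OF assms] sufficiency[OF assms(1)] by blast

end
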